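(* Let $\mathbf{F}:\ell^n\times\ell^m\to\ell^n$ be a strictly causal plant operator with components $F_0\equiv0$, $F_t(x_{t:0},u_{t:0})=f_t(x_{t-1:0},u_{t-1:0})$, and let $\mathbf{\Psi}=(\mathbf{\Psi}^x,\mathbf{\Psi}^u):\ell^n\to\ell^n\times\ell^m$ be causal with $\mathbf{\Psi}^x-\mathbf{I}$ strictly causal ($\mathbf{\Psi}$ is not assumed to be a closed-loop map). Fix $p$. Assume that $\mathbf{\Psi}$ and $\mathbf{F}$ are incrementally finite gain $\ell_p$-stable, and that the residual operator $$\mathbf{\Delta}[\mathbf{F},\mathbf{\Psi}]:=\mathbf{F}(\mathbf{\Psi})+\mathbf{I}-\mathbf{\Psi}^x:\ell^n\to\ell^n$$ is $(\gamma,\beta)$-incrementally finite gain $\ell_p$-stable with $\gamma<1$. Then, for every $\bm{\delta}^*\in\ell^n_p\times\ell^m_p\times\ell^n_p$, the perturbed closed-loop map $\mathbf{\Phi}_{S_1'}[\mathbf{F},\mathbf{\Psi}]$ is finite gain $\ell_p$-stable at $\bm{\delta}^*$.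
   Context: $\ell^n$ is the space of sequences in $\mathbb{R}^n$ indexed by $t=0,1,2,\dots$; $|\cdot|$ is a fixed norm on each $\mathbb{R}^k$; $\|\mathbf{x}\|_p=(\sum_{k\ge0}|x_k|^p)^{1/p}$ for $p<\infty$, $\|\mathbf{x}\|_\infty=\sup_k|x_k|$, and $\ell^n_p=\{\mathbf{x}\in\ell^n:\|\mathbf{x}\|_p<\infty\}$. On product spaces the norm is the sum, e.g. $\|(\mathbf{w},\mathbf{d},\mathbf{v})\|_p=\|\mathbf{w}\|_p+\|\mathbf{d}\|_p+\|\mathbf{v}\|_p$. Causal / strictly causal operators: $(\mathbf{A}(\mathbf{x}))_t=A_t(x_{t:0})$ with component functions $A_t$, strictly causal if $A_t$ does not depend on its first argument $x_t$; sums are pointwise, products are compositions, $\mathbf{F}(\mathbf{\Psi})$ means $\mathbf{w}\mapsto\mathbf{F}(\mathbf{\Psi}^x(\mathbf{w}),\mathbf{\Psi}^u(\mathbf{w}))$. An operator $\mathbf{A}$ between such spaces is: finite gain (f.g.) $\ell_p$-stable at $\mathbf{a}_0\in\ell_p$ if there are $\gamma,\beta\ge0$ with $\|\mathbf{A}(\mathbf{a})-\mathbf{A}(\mathbf{a}_0)\|_p\le\gamma\|\mathbf{a}-\mathbf{a}_0\|_p+\beta$ for all $\mathbf{a}\in\ell_p$; $(\gamma,\beta)$-incrementally finite gain (i.f.g.) $\ell_p$-stable if $\|\mathbf{A}(\mathbf{a})-\mathbf{A}(\mathbf{a}')\|_p\le\gamma\|\mathbf{a}-\mathbf{a}'\|_p+\beta$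 for all $\mathbf{a},\mathbf{a}'\in\ell_p$ (i.f.g. if this holds for some $\gamma,\beta\ge0$). The perturbed closed loop $S_1'$: given perturbations $\bm{\delta}=(\mathbf{w},\mathbf{d},\mathbf{v})\in\ell^n\times\ell^m\times\ell^n$, define recursively $x_0=w_0$, $x_t=f_t(x_{t-1:0},u_{t-1:0})+w_t$ ($t\ge1$), $\hat w_t=x_t+v_t-\Psi^x_t(0,\hat w_{t-1:0})$, $u_t=\Psi^u_t(\hat w_{t:0})+d_t$ (the controller with internal state $\hat{\mathbf{w}}$ is the "system level controller" parametrized by $\mathbf{\Psi}$). The map $\mathbf{\Phi}_{S_1'}[\mathbf{F},\mathbf{\Psi}]:\ell^n\times\ell^m\times\ell^n\to\ell^n\times\ell^m\times\ell^n$ is $\bm{\delta}\mapsto(\mathbf{x},\mathbf{u},\hat{\mathbf{w}})$. *)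

theory Defs
  imports "HOL-Analysis.Analysis" "HOL-Library.Product_Plus" "HOL-Library.Function_Algebras"
begin

text \<open>A norm on a real vector space, given as an explicit function (the paper fixes an
arbitrary norm on each R^k).\<close>
definition is_norm :: "('a::real_vector \<Rightarrow> real) \<Rightarrow> bool" where
  "is_norm N \<longleftrightarrow> (\<forall>x. 0 \<le> N x) \<and> (\<forall>x. N x = 0 \<longleftrightarrow> x = 0) \<and>
     (\<forall>c x. N (scaleR c x) = \<bar>c\<bar> * N x) \<and> (\<forall>x y. N (x + y) \<le> N x + N y)"

text \<open>The l_p norm of a sequence (value infinity if the sequence is not in l_p);
p is an extended real, p = infinity giving the sup norm.\<close>
definition lp_norm :: "('a \<Rightarrow> real) \<Rightarrow> ereal \<Rightarrow> (nat \<Rightarrow> 'a) \<Rightarrow> ereal" where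
  "lp_norm N p x =
     (if p = \<infinity> then (SUP k. ereal (N (x k)))
      else if summable (\<lambda>k. N (x k) powr real_of_ereal p)
        then ereal ((\<Sum>k. N (x k) powr real_of_ereal p) powr (1 / real_of_ereal p))
        else \<infinity>)"

definition pair_norm :: "('a \<Rightarrow> ereal) \<Rightarrow> ('b \<Rightarrow> ereal) \<Rightarrow> 'a \<times> 'b \<Rightarrow> ereal" where
  "pair_norm N1 N2 = (\<lambda>(a, b). N1 a + N2 b)"

definition causal :: "((nat \<Rightarrow> 'a) \<Rightarrow> (nat \<Rightarrow> 'b)) \<Rightarrow> bool" where
  "causal A \<longleftrightarrow> (\<forall>x y t. (\<forall>s\<le>t. x s = y s) \<longrightarrow> A x t = A y t)"

definition strictly_causal :: "((nat \<Rightarrow> 'a) \<Rightarrow> (nat \<Rightarrow> 'b)) \<Rightarrow> bool" where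
  "strictly_causal A \<longleftrightarrow> (\<forall>x y t. (\<forall>s<t. x s = y s) \<longrightarrow> A x t = A y t)"

definition strictly_causal2 :: "((nat \<Rightarrow> 'a) \<times> (nat \<Rightarrow> 'b) \<Rightarrow> (nat \<Rightarrow> 'c)) \<Rightarrow> bool" where
  "strictly_causal2 F \<longleftrightarrow>
     (\<forall>x u y v t. (\<forall>s<t. x s = y s \<and> u s = v s) \<longrightarrow> F (x, u) t = F (y, v) t)"

text \<open>Stability notions; NA, NB are the l_p norms of domain and codomain
(membership in l_p means finite norm).\<close>
definition fg_stable_at :: "('a::minus \<Rightarrow> ereal) \<Rightarrow> ('b::minus \<Rightarrow> ereal) \<Rightarrow> ('a \<Rightarrow> 'b) \<Rightarrow> 'a \<Rightarrow> bool" where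
  "fg_stable_at NA NB A a0 \<longleftrightarrow>
     (\<exists>\<gamma> \<beta>. 0 \<le> \<gamma> \<and> 0 \<le> \<beta> \<and>
        (\<forall>a. NA a < \<infinity> \<longrightarrow> NB (A a - A a0) \<le> ereal \<gamma> * NA (a - a0) + ereal \<beta>))"

definition ifg_stable_with :: "('a::minus \<Rightarrow> ereal) \<Rightarrow> ('b::minus \<Rightarrow> ereal) \<Rightarrow> ('a \<Rightarrow> 'b) \<Rightarrow> real \<Rightarrow> real \<Rightarrow> bool" where
  "ifg_stable_with NA NB A \<gamma> \<beta> \<longleftrightarrow> 0 \<le> \<gamma> \<and> 0 \<le> \<beta> \<and>
     (\<forall>a a'. NA a < \<infinity> \<longrightarrow> NA a' < \<infinity> \<longrightarrow> NB (A a - A a') \<le> ereal \<gamma> * NA (a - a') + ereal \<beta>)"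

definition ifg_stable :: "('a::minus \<Rightarrow> ereal) \<Rightarrow> ('b::minus \<Rightarrow> ereal) \<Rightarrow> ('a \<Rightarrow> 'b) \<Rightarrow> bool" where
  "ifg_stable NA NB A \<longleftrightarrow> (\<exists>\<gamma> \<beta>. ifg_stable_with NA NB A \<gamma> \<beta>)"

text \<open>The perturbed closed loop S1': (x,u,what) solves the recursion driven by (w,d,v).\<close>
definition closed_loop_S1 ::
  "((nat \<Rightarrow> 'x::ab_group_add) \<times> (nat \<Rightarrow> 'u::ab_group_add) \<Rightarrow> (nat \<Rightarrow> 'x)) \<Rightarrow>
   ((nat \<Rightarrow> 'x) \<Rightarrow> (nat \<Rightarrow> 'x)) \<Rightarrow> ((nat \<Rightarrow> 'x) \<Rightarrow> (nat \<Rightarrow> 'u)) \<Rightarrow>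
   (nat \<Rightarrow> 'x) \<times> (nat \<Rightarrow> 'u) \<times> (nat \<Rightarrow> 'x) \<Rightarrow>
   (nat \<Rightarrow> 'x) \<times> (nat \<Rightarrow> 'u) \<times> (nat \<Rightarrow> 'x) \<Rightarrow> bool" where
  "closed_loop_S1 F Psix Psiu \<delta> y \<longleftrightarrow>
     (case \<delta> of (w, d, v) \<Rightarrow> case y of (x, u, wh) \<Rightarrow>
        x 0 = w 0 \<and> (\<forall>t>0. x t = F (x, u) t + w t) \<and>
        (\<forall>t. wh t = x t + v t - Psix (wh(t := 0)) t) \<and>
        (\<forall>t. u t = Psiu wh t + d t))"

text \<open>The map delta |-> (x,u,what) (the recursion determines the solution uniquely).\<close>
definition Phi_S1 where
  "Phi_S1 F Psix Psiu \<delta> = (THE y. closed_loop_S1 F Psix Psiu \<delta> y)"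

end

theory Submission
  imports Defs
begin

text \<open>Because \<open>Psix - I\<close> is strictly causal, the controller state \<open>wh\<close> (the paper's
  \<open>\<hat>w\<close>) satisfies \<open>Psix wh = x + v\<close>, so the closed loop can be rewritten as
  \<open>wh = \<Delta> wh + r\<close> with \<open>r = F(x, u) - F(x + v, u - d) + w + v\<close>, whose size is controlled
  by the incremental gain of F and the size of the perturbation. Comparing two perturbations,
  the contraction \<open>\<gamma> < 1\<close> bounds the increment of \<open>wh\<close> by a small-gain argument, and the
  incremental gains of \<open>Psix\<close> and \<open>Psiu\<close> then bound the increments of x and u. None of the
  closed-loop signals is known to lie in l_p, so every incremental bound is first applied to
  truncations, where causality makes it available, and then passed to the limit.\<close>

section \<open>l_p norms of sequences\<close>

lemma is_normD:
  assumes "is_norm N"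
  shows "N 0 = 0" "0 \<le> N x" "N (- x) = N x" "N (x + y) \<le> N x + N y"
proof -
  show "N 0 = 0" "0 \<le> N x" "N (x + y) \<le> N x + N y"
    using assms unfolding is_norm_def by auto
  have "N (scaleR (-1) x) = \<bar>-1\<bar> * N x"
    using assms unfolding is_norm_def by blast
  then show "N (- x) = N x" by simp
qed

lemma ereal_ge_1_cases:
  assumes "1 \<le> p"
  obtains "p = \<infinity>" | q where "p = ereal q" "real_of_ereal p = q" "1 \<le> q"
  using assms by (cases p) auto

lemma lp_norm_nonneg:
  assumes "is_norm N" "1 \<le> p"
  shows "0 \<le> lp_norm N p a"
  using assms(2)
proof (cases rule: ereal_ge_1_cases)
  case 1
  have "0 \<le> ereal (N (a 0))" using is_normD(2)[OF assms(1)] by simp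
  also have "\<dots> \<le> (SUP k. ereal (N (a k)))" by (rule SUP_upper) simp
  finally show ?thesis using 1 unfolding lp_norm_def by simp
qed (auto simp: lp_norm_def)

lemma lp_norm_finiteE:
  assumes "is_norm N" "1 \<le> p" "lp_norm N p a < \<infinity>"
  obtains r where "0 \<le> r" "lp_norm N p a = ereal r"
  using lp_norm_nonneg[OF assms(1,2), of a] assms(3) by (cases "lp_norm N p a") auto

lemma lp_norm_mono:
  assumes "is_norm N" "1 \<le> p" "\<And>k. N (a k) \<le> N (b k)"
  shows "lp_norm N p a \<le> lp_norm N p b"
  using assms(2)
proof (cases rule: ereal_ge_1_cases)
  case 1
  then show ?thesis
    unfolding lp_norm_def using assms(3) by (auto intro!: SUP_mono)
      (meson ereal_less_eq(3) rangeI)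
next
  case (2 q)
  show ?thesis
  proof (cases "summable (\<lambda>k. N (b k) powr q)")
    case sb: True
    have le: "N (a k) powr q \<le> N (b k) powr q" for k
      using assms(3) is_normD(2)[OF assms(1)] by (intro powr_mono2) (use 2 in auto)
    have sa: "summable (\<lambda>k. N (a k) powr q)"
      by (rule summable_comparison_test'[OF sb]) (use le in auto)
    have "(\<Sum>k. N (a k) powr q) \<le> (\<Sum>k. N (b k) powr q)"
      by (rule suminf_le[OF le sa sb])
    then have "(\<Sum>k. N (a k) powr q) powr (1/q) \<le> (\<Sum>k. N (b k) powr q) powr (1/q)"
      using 2 sa by (intro powr_mono2 suminf_nonneg) auto
    then show ?thesis using 2 sa sb unfolding lp_norm_def by simp
  qed (use 2 in \<open>simp add: lp_norm_def\<close>)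
qed

lemma lp_norm_uminus:
  assumes "is_norm N" "1 \<le> p"
  shows "lp_norm N p (- a) = lp_norm N p a"
  using lp_norm_mono[OF assms, of a "- a"] lp_norm_mono[OF assms, of "- a" a]
  by (simp add: is_normD(3)[OF assms(1)])

definition trunc :: "nat \<Rightarrow> (nat \<Rightarrow> 'a::zero) \<Rightarrow> nat \<Rightarrow> 'a" where
  "trunc T a s = (if s \<le> T then a s else 0)"

lemma trunc_add [simp]: "trunc T (a + b) = trunc T a + trunc T (b :: nat \<Rightarrow> 'a::monoid_add)"
  by (auto simp: trunc_def)

lemma trunc_diff [simp]: "trunc T (a - b) = trunc T a - trunc T (b :: nat \<Rightarrow> 'a::group_add)"
  by (auto simp: trunc_def)

lemma lp_norm_trunc_le:
  assumes "is_norm N" "1 \<le> p"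
  shows "lp_norm N p (trunc T a) \<le> lp_norm N p a"
  by (rule lp_norm_mono[OF assms]) (simp add: trunc_def is_normD[OF assms(1)])

lemma lp_norm_trunc_finite:
  assumes "is_norm N" "1 \<le> p"
  shows "lp_norm N p (trunc T a) < \<infinity>"
  using assms(2)
proof (cases rule: ereal_ge_1_cases)
  case 1
  have "N (trunc T a k) \<le> (\<Sum>s\<le>T. N (a s))" for k
    using is_normD(1,2)[OF assms(1)]
    by (auto simp: trunc_def intro: member_le_sum sum_nonneg)
  then have "(SUP k. ereal (N (trunc T a k))) \<le> ereal (\<Sum>s\<le>T. N (a s))"
    by (simp add: SUP_least)
  also have "\<dots> < \<infinity>" by simp
  finally show ?thesis using 1 unfolding lp_norm_def by simp
next
  case (2 q)
  have "summable (\<lambda>k. N (trunc T a k) powr q)"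
    by (rule summable_finite[of "{..T}"]) (simp_all add: trunc_def is_normD(1)[OF assms(1)])
  then show ?thesis using 2 unfolding lp_norm_def by simp
qed

lemma lp_norm_le_if_trunc_le:
  assumes "is_norm N" "1 \<le> p" "\<And>T. lp_norm N p (trunc T a) \<le> ereal c"
  shows "lp_norm N p a \<le> ereal c"
  using assms(2)
proof (cases rule: ereal_ge_1_cases)
  case 1
  have "ereal (N (a k)) \<le> ereal c" for k
  proof -
    have "ereal (N (a k)) \<le> lp_norm N p (trunc k a)"
      using 1 unfolding lp_norm_def by (auto intro!: SUP_upper2[of k] simp: trunc_def)
    then show ?thesis using assms(3)[of k] by order
  qed
  then show ?thesis using 1 unfolding lp_norm_def by (simp add: SUP_least)
next
  case (2 q)
  have partial: "(\<Sum>k<n. N (a k) powr q) \<le> c powr q" for n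
  proof -
    have "summable (\<lambda>k. N (trunc n a k) powr q)"
      by (rule summable_finite[of "{..n}"]) (auto simp: trunc_def is_normD(1)[OF assms(1)])
    moreover have "(\<Sum>k. N (trunc n a k) powr q) = (\<Sum>k\<le>n. N (a k) powr q)"
      by (subst suminf_finite[of "{..n}"]) (auto simp: trunc_def is_normD(1)[OF assms(1)])
    ultimately have "(\<Sum>k\<le>n. N (a k) powr q) powr (1/q) \<le> c"
      using assms(3)[of n] 2 unfolding lp_norm_def by simp
    then have "((\<Sum>k\<le>n. N (a k) powr q) powr (1/q)) powr q \<le> c powr q"
      using 2 by (intro powr_mono2) auto
    then have "(\<Sum>k\<le>n. N (a k) powr q) \<le> c powr q"
      using 2 by (simp add: powr_powr sum_nonneg)
    moreover have "(\<Sum>k<n. N (a k) powr q) \<le> (\<Sum>k\<le>n. N (a k) powr q)"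
      by (rule sum_mono2) auto
    ultimately show ?thesis by linarith
  qed
  have c: "0 \<le> c"
    using order_trans[OF lp_norm_nonneg[OF assms(1,2)] assms(3)] by simp
  have sa: "summable (\<lambda>k. N (a k) powr q)"
    by (rule summableI_nonneg_bounded[OF _ partial]) simp
  have "(\<Sum>k. N (a k) powr q) powr (1/q) \<le> (c powr q) powr (1/q)"
    using 2 sa by (intro powr_mono2 suminf_le_const[OF sa partial] suminf_nonneg) auto
  then show ?thesis using 2 c sa unfolding lp_norm_def by (simp add: powr_powr)
qed

text \<open>Convexity of \<open>t powr q\<close> at the points \<open>x / l\<close> and \<open>y / (1 - l)\<close>.\<close>
lemma powr_add_le_weighted:
  fixes x y l q :: real
  assumes "0 \<le> x" "0 \<le> y" "0 < l" "l < 1" "1 \<le> q"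
  shows "(x + y) powr q \<le> l powr (1 - q) * x powr q + (1 - l) powr (1 - q) * y powr q"
proof (cases "x = 0 \<or> y = 0")
  case True
  have "1 \<le> l powr (1 - q)" "1 \<le> (1 - l) powr (1 - q)"
    using assms powr_mono'[of "1 - q" 0 l] powr_mono'[of "1 - q" 0 "1 - l"] by auto
  then show ?thesis using True assms by (auto simp: mult_le_cancel_right1)
next
  case False
  then have pos: "0 < x" "0 < y" using assms by auto
  have "(l * (x / l) + (1 - l) * (y / (1 - l))) powr q
        \<le> l * (x / l) powr q + (1 - l) * (y / (1 - l)) powr q"
    using convex_onD[OF powr_convex[OF assms(5)], of "1 - l" "x / l" "y / (1 - l)"] assms pos
    by auto
  then show ?thesis
    using assms pos by (simp add: powr_divide powr_diff)
qed

lemma lp_norm_zeroD: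
  assumes "is_norm N" "1 \<le> p" "lp_norm N p a = 0"
  shows "a k = 0"
proof -
  have "N (a k) = 0"
    using assms(2)
  proof (cases rule: ereal_ge_1_cases)
    case 1
    have "ereal (N (a k)) \<le> 0"
      using assms(3) 1 SUP_upper[of k UNIV "\<lambda>k. ereal (N (a k))"] unfolding lp_norm_def by simp
    then show ?thesis using is_normD(2)[OF assms(1), of "a k"] by simp
  next
    case (2 q)
    then have sa: "summable (\<lambda>k. N (a k) powr q)" and "(\<Sum>k. N (a k) powr q) powr (1/q) = 0"
      using assms(3) unfolding lp_norm_def by (auto split: if_splits)
    then have "(\<Sum>k. N (a k) powr q) = 0" by simp
    then show ?thesis using suminf_eq_zero_iff[OF sa] by simp
  qed
  then show ?thesis using assms(1) unfolding is_norm_def by blast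
qed

text \<open>Minkowski's inequality, for a and b of positive l_q norms \<open>\<alpha>\<close> and \<open>\<beta>\<close>: with
  \<open>l = \<alpha> / (\<alpha> + \<beta>)\<close> the weighted bound sums to \<open>(\<alpha> + \<beta>) powr q\<close>.\<close>
lemma minkowski_suminf:
  assumes N: "is_norm N" and q: "1 \<le> q"
    and sa: "summable (\<lambda>k. N (a k) powr q)" and sb: "summable (\<lambda>k. N (b k) powr q)"
    and A: "(\<Sum>k. N (a k) powr q) = \<alpha> powr q" and B: "(\<Sum>k. N (b k) powr q) = \<beta> powr q"
    and pos: "0 < \<alpha>" "0 < \<beta>"
  shows "summable (\<lambda>k. N (a k + b k) powr q)"
    "(\<Sum>k. N (a k + b k) powr q) \<le> (\<alpha> + \<beta>) powr q"
proof -
  define l where "l = \<alpha> / (\<alpha> + \<beta>)"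
  have l: "0 < l" "l < 1" "1 - l = \<beta> / (\<alpha> + \<beta>)"
    using pos unfolding l_def by (auto simp: field_simps)
  define g where "g k = l powr (1 - q) * N (a k) powr q + (1 - l) powr (1 - q) * N (b k) powr q" for k
  have le: "N (a k + b k) powr q \<le> g k" for k
  proof -
    have "N (a k + b k) powr q \<le> (N (a k) + N (b k)) powr q"
      using q is_normD[OF N] by (intro powr_mono2) auto
    also have "\<dots> \<le> g k"
      unfolding g_def using l q is_normD(2)[OF N] by (intro powr_add_le_weighted) auto
    finally show ?thesis .
  qed
  have sg: "summable g" unfolding g_def using sa sb by (intro summable_add summable_mult)
  show sab: "summable (\<lambda>k. N (a k + b k) powr q)"
    by (rule summable_comparison_test'[OF sg]) (use le in auto)
  have weight: "(c / (\<alpha> + \<beta>)) powr (1 - q) * c powr q = c * (\<alpha> + \<beta>) powr (q - 1)"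
    if "0 < c" for c
  proof -
    have "(c / (\<alpha> + \<beta>)) powr (1 - q) * c powr q
        = (c powr (1 - q) * c powr q) / (\<alpha> + \<beta>) powr (1 - q)"
      using that pos by (simp add: powr_divide)
    also have "\<dots> = c / (\<alpha> + \<beta>) powr (1 - q)"
      using that by (simp add: powr_add[symmetric])
    also have "\<dots> = c * (\<alpha> + \<beta>) powr (q - 1)"
      by (simp add: powr_minus_divide[symmetric] divide_inverse powr_minus[symmetric])
    finally show ?thesis .
  qed
  have "(\<Sum>k. N (a k + b k) powr q) \<le> (\<Sum>k. g k)" by (rule suminf_le[OF le sab sg])
  also have "\<dots> = l powr (1 - q) * \<alpha> powr q + (1 - l) powr (1 - q) * \<beta> powr q"
    unfolding g_def using sa sb A B by (simp add: suminf_add[symmetric] suminf_mult)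
  also have "\<dots> = (\<alpha> + \<beta>) * (\<alpha> + \<beta>) powr (q - 1)"
    unfolding l(3) unfolding l_def using weight pos by (simp add: distrib_right)
  also have "\<dots> = (\<alpha> + \<beta>) powr q"
    using pos by (simp add: powr_mult_base)
  finally show "(\<Sum>k. N (a k + b k) powr q) \<le> (\<alpha> + \<beta>) powr q" .
qed

lemma lp_norm_triangle_summable:
  assumes N: "is_norm N" and p: "p = ereal q" "1 \<le> q"
    and sa: "summable (\<lambda>k. N (a k) powr q)" and sb: "summable (\<lambda>k. N (b k) powr q)"
  shows "lp_norm N p (a + b) \<le> lp_norm N p a + lp_norm N p b"
proof -
  have p1: "1 \<le> p" using p by simp
  have nonneg: "0 \<le> lp_norm N p a" "0 \<le> lp_norm N p b" using lp_norm_nonneg[OF N p1] by auto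
  define \<alpha> where "\<alpha> = (\<Sum>k. N (a k) powr q) powr (1/q)"
  define \<beta> where "\<beta> = (\<Sum>k. N (b k) powr q) powr (1/q)"
  have norms: "lp_norm N p a = ereal \<alpha>" "lp_norm N p b = ereal \<beta>"
    using p sa sb unfolding lp_norm_def \<alpha>_def \<beta>_def by auto
  show ?thesis
  proof (cases "\<alpha> = 0 \<or> \<beta> = 0")
    case True
    then have "a = 0 \<or> b = 0" using lp_norm_zeroD[OF N p1] norms by (auto simp: fun_eq_iff)
    then show ?thesis using nonneg by (auto intro: add_increasing add_increasing2)
  next
    case False
    then have pos: "0 < \<alpha>" "0 < \<beta>" unfolding \<alpha>_def \<beta>_def by auto
    have "(\<Sum>k. N (a k) powr q) = \<alpha> powr q" "(\<Sum>k. N (b k) powr q) = \<beta> powr q"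
      unfolding \<alpha>_def \<beta>_def using p sa sb by (auto simp: powr_powr suminf_nonneg)
    note mk = minkowski_suminf[OF N p(2) sa sb this pos]
    have "(\<Sum>k. N (a k + b k) powr q) powr (1/q) \<le> ((\<alpha> + \<beta>) powr q) powr (1/q)"
      using p mk by (intro powr_mono2 suminf_nonneg) auto
    also have "\<dots> = \<alpha> + \<beta>" using pos p by (simp add: powr_powr)
    finally show ?thesis using p mk(1) norms unfolding lp_norm_def by simp
  qed
qed

lemma lp_norm_triangle:
  assumes N: "is_norm N" and p: "1 \<le> p"
  shows "lp_norm N p (a + b) \<le> lp_norm N p a + lp_norm N p b"
  using p
proof (cases rule: ereal_ge_1_cases)
  case 1
  have "ereal (N (a k + b k)) \<le> (SUP k. ereal (N (a k))) + (SUP k. ereal (N (b k)))" for k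
  proof -
    have "ereal (N (a k + b k)) \<le> ereal (N (a k)) + ereal (N (b k))"
      using is_normD(4)[OF N] by simp
    also have "\<dots> \<le> (SUP k. ereal (N (a k))) + (SUP k. ereal (N (b k)))"
      by (intro add_mono SUP_upper) auto
    finally show ?thesis .
  qed
  then show ?thesis using 1 unfolding lp_norm_def by (simp add: SUP_least)
next
  case (2 q)
  show ?thesis
  proof (cases "summable (\<lambda>k. N (a k) powr q) \<and> summable (\<lambda>k. N (b k) powr q)")
    case False
    then have "lp_norm N p a = \<infinity> \<or> lp_norm N p b = \<infinity>"
      using 2 unfolding lp_norm_def by auto
    then show ?thesis using lp_norm_nonneg[OF N p] by auto
  qed (use lp_norm_triangle_summable[OF N 2(1,3)] in blast)
qed

lemma lp_norm_diff_le:
  assumes "is_norm N" "1 \<le> p"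
  shows "lp_norm N p (a - b) \<le> lp_norm N p a + lp_norm N p b"
  using lp_norm_triangle[OF assms, of a "- b"] lp_norm_uminus[OF assms, of b] by simp

lemma pair_norm_nonneg:
  assumes "\<And>a. 0 \<le> N1 a" "\<And>b. 0 \<le> N2 b"
  shows "0 \<le> pair_norm N1 N2 z"
  using assms by (cases z) (simp add: pair_norm_def)

lemma pair_norm_triangle:
  assumes "\<And>a a'. N1 (a + a') \<le> N1 a + N1 a'" "\<And>b b'. N2 (b + b') \<le> N2 b + N2 b'"
  shows "pair_norm N1 N2 (z + z') \<le> pair_norm N1 N2 z + pair_norm N1 N2 z'"
proof -
  obtain a b a' b' where z: "z = (a, b)" "z' = (a', b')" by (cases z; cases z')
  have "N1 (a + a') + N2 (b + b') \<le> (N1 a + N1 a') + (N2 b + N2 b')"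
    by (rule add_mono[OF assms])
  also have "\<dots> = (N1 a + N2 b) + (N1 a' + N2 b')"
    by (simp only: add.assoc add.left_commute)
  finally show ?thesis unfolding z pair_norm_def by simp
qed

lemma pair_norm_le_components:
  assumes "\<And>a. 0 \<le> N1 a" "\<And>b. 0 \<le> N2 b" "pair_norm N1 N2 (a, b) \<le> e"
  shows "N1 a \<le> e" "N2 b \<le> e"
proof -
  have "N1 a \<le> N1 a + N2 b" "N2 b \<le> N1 a + N2 b"
    by (rule add_increasing2[OF assms(2) order_refl], rule add_increasing[OF assms(1) order_refl])
  then show "N1 a \<le> e" "N2 b \<le> e"
    using assms(3) unfolding pair_norm_def by simp_all
qed

lemma pair_norm3_le_components:
  assumes "\<And>a. 0 \<le> N1 a" "\<And>b. 0 \<le> N2 b" "\<And>c. 0 \<le> N3 c"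
    and "pair_norm N1 (pair_norm N2 N3) (a, b, c) \<le> e"
  shows "N1 a \<le> e" "N2 b \<le> e" "N3 c \<le> e"
proof -
  note inner = pair_norm_le_components[of N2 N3, OF assms(2,3)]
  have "pair_norm N2 N3 (b, c) \<le> e"
    using pair_norm_le_components(2)[of N1 "pair_norm N2 N3", OF assms(1) pair_norm_nonneg assms(4)]
      assms(2,3) by simp
  then show "N1 a \<le> e" "N2 b \<le> e" "N3 c \<le> e"
    using pair_norm_le_components(1)[of N1 "pair_norm N2 N3", OF assms(1) pair_norm_nonneg assms(4)]
      inner assms(2,3) by simp_all
qed

lemma ifg_stable_with_pair_components:
  assumes ifg: "ifg_stable_with NA (pair_norm N1 N2) (\<lambda>a. (A a, B a)) g b"
    and N1: "\<And>a. 0 \<le> N1 a" and N2: "\<And>b. 0 \<le> N2 b"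
  shows "ifg_stable_with NA N1 A g b" "ifg_stable_with NA N2 B g b"
proof -
  have bound: "pair_norm N1 N2 (A a - A a', B a - B a') \<le> ereal g * NA (a - a') + ereal b"
    if "NA a < \<infinity>" "NA a' < \<infinity>" for a a'
    using ifg that unfolding ifg_stable_with_def by simp
  have "0 \<le> g" "0 \<le> b" using ifg unfolding ifg_stable_with_def by simp_all
  with pair_norm_le_components(1)[of N1 N2, OF N1 N2 bound]
    pair_norm_le_components(2)[of N1 N2, OF N1 N2 bound]
  show "ifg_stable_with NA N1 A g b" "ifg_stable_with NA N2 B g b"
    unfolding ifg_stable_with_def by simp_all
qed

section \<open>Causal operators and well-posedness of the closed loop\<close>

lemma strictly_causalD:
  "strictly_causal A \<Longrightarrow> (\<And>s. s < t \<Longrightarrow> x s = y s) \<Longrightarrow> A x t = A y t"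
  unfolding strictly_causal_def by blast

lemma causalD:
  "causal A \<Longrightarrow> (\<And>s. s \<le> t \<Longrightarrow> x s = y s) \<Longrightarrow> A x t = A y t"
  unfolding causal_def by blast

lemma strictly_causal_fixed_point_unique:
  assumes "strictly_causal G" "G y = y" "G z = z"
  shows "y = z"
proof
  fix t show "y t = z t"
  proof (induction t rule: less_induct)
    case (less t)
    then have "G y t = G z t" by (intro strictly_causalD[OF assms(1)])
    then show ?case using assms(2,3) by simp
  qed
qed

lemma strictly_causal_iterates_agree:
  fixes G :: "(nat \<Rightarrow> 'a) \<Rightarrow> nat \<Rightarrow> 'a"
  assumes "strictly_causal G" "s < n" "s < m"
  shows "(G ^^ n) c s = (G ^^ m) c s"
  using assms(2,3)
proof (induction s arbitrary: n m rule: less_induct)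
  case (less s)
  obtain n' m' where n: "n = Suc n'" and m: "m = Suc m'"
    using less.prems by (metis gr0_implies_Suc gr_zeroI less_zeroE)
  have "G ((G ^^ n') c) s = G ((G ^^ m') c) s"
  proof (rule strictly_causalD[OF assms(1)])
    fix r assume "r < s"
    then show "(G ^^ n') c r = (G ^^ m') c r"
      using less.prems n m by (intro less.IH) auto
  qed
  then show ?case unfolding n m by simp
qed

lemma strictly_causal_fixed_point:
  fixes G :: "(nat \<Rightarrow> 'a) \<Rightarrow> nat \<Rightarrow> 'a"
  assumes "strictly_causal G"
  shows "G (\<lambda>t. (G ^^ Suc t) c t) = (\<lambda>t. (G ^^ Suc t) c t)"
proof
  fix t
  have "G (\<lambda>t. (G ^^ Suc t) c t) t = G ((G ^^ t) c) t"
    by (intro strictly_causalD[OF assms] strictly_causal_iterates_agree[OF assms]) auto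
  then show "G (\<lambda>t. (G ^^ Suc t) c t) t = (G ^^ Suc t) c t" by simp
qed

text \<open>The closed loop \<open>S1'\<close> as a map on sequences of triples \<open>(x t, u t, wh t)\<close>. The new
  values \<open>x t\<close> and \<open>wh t\<close> are computed first and substituted into the controller, so the
  value at \<open>t\<close> only reads the argument before \<open>t\<close>.\<close>
definition closed_loop_step ::
  "((nat \<Rightarrow> 'x::ab_group_add) \<times> (nat \<Rightarrow> 'u::ab_group_add) \<Rightarrow> (nat \<Rightarrow> 'x)) \<Rightarrow>
   ((nat \<Rightarrow> 'x) \<Rightarrow> (nat \<Rightarrow> 'x)) \<Rightarrow> ((nat \<Rightarrow> 'x) \<Rightarrow> (nat \<Rightarrow> 'u)) \<Rightarrow>
   (nat \<Rightarrow> 'x) \<times> (nat \<Rightarrow> 'u) \<times> (nat \<Rightarrow> 'x) \<Rightarrow>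
   (nat \<Rightarrow> 'x \<times> 'u \<times> 'x) \<Rightarrow> nat \<Rightarrow> 'x \<times> 'u \<times> 'x" where
  "closed_loop_step F Px Pu \<delta> z t =
     (case \<delta> of (w, d, v) \<Rightarrow>
       let x = fst \<circ> z; u = fst \<circ> snd \<circ> z; wh = snd \<circ> snd \<circ> z;
           xt = (if t = 0 then w 0 else F (x, u) t + w t);
           wht = xt + v t - Px (wh(t := 0)) t
       in (xt, Pu (wh(t := wht)) t + d t, wht))"

lemma closed_loop_step_triples:
  "closed_loop_step F Px Pu (w, d, v) (\<lambda>t. (x t, u t, wh t)) t =
     (let xt = (if t = 0 then w 0 else F (x, u) t + w t);
          wht = xt + v t - Px (wh(t := 0)) t
      in (xt, Pu (wh(t := wht)) t + d t, wht))"
proof -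
  have "fst \<circ> (\<lambda>t. (x t, u t, wh t)) = x" "fst \<circ> snd \<circ> (\<lambda>t. (x t, u t, wh t)) = u"
    "snd \<circ> snd \<circ> (\<lambda>t. (x t, u t, wh t)) = wh"
    by auto
  then show ?thesis unfolding closed_loop_step_def by simp
qed

lemma closed_loop_S1_iff_fixed_point:
  "closed_loop_S1 F Px Pu \<delta> (x, u, wh) \<longleftrightarrow>
     closed_loop_step F Px Pu \<delta> (\<lambda>t. (x t, u t, wh t)) = (\<lambda>t. (x t, u t, wh t))"
proof -
  obtain w d v where \<delta>: "\<delta> = (w, d, v)" by (cases \<delta>)
  have triple: "(a, Pu (wh(t := b)) t + d t, b) = (x t, u t, wh t) \<longleftrightarrow>
      x t = a \<and> wh t = b \<and> u t = Pu wh t + d t" for a b t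
    by (metis fun_upd_triv prod.inject)
  have "closed_loop_S1 F Px Pu \<delta> (x, u, wh) \<longleftrightarrow>
      (\<forall>t. x t = (if t = 0 then w 0 else F (x, u) t + w t) \<and>
         wh t = x t + v t - Px (wh(t := 0)) t \<and> u t = Pu wh t + d t)"
    unfolding closed_loop_S1_def \<delta> by auto
  also have "\<dots> \<longleftrightarrow> (\<forall>t. closed_loop_step F Px Pu \<delta> (\<lambda>t. (x t, u t, wh t)) t = (x t, u t, wh t))"
    unfolding \<delta> closed_loop_step_triples Let_def triple by auto
  finally show ?thesis by (simp only: fun_eq_iff)
qed

lemma strictly_causal_closed_loop_step:
  fixes F :: "(nat \<Rightarrow> 'x::ab_group_add) \<times> (nat \<Rightarrow> 'u::ab_group_add) \<Rightarrow> nat \<Rightarrow> 'x"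
  assumes "strictly_causal2 F" "causal Px" "causal Pu"
  shows "strictly_causal (closed_loop_step F Px Pu \<delta>)"
  unfolding strictly_causal_def
proof (intro allI impI)
  fix y z :: "nat \<Rightarrow> 'x \<times> 'u \<times> 'x" and t
  assume past: "\<forall>s<t. y s = z s"
  obtain w d v where \<delta>: "\<delta> = (w, d, v)" by (cases \<delta>)
  let ?wh = "\<lambda>y. snd \<circ> snd \<circ> y"
  have F: "F (fst \<circ> y, fst \<circ> snd \<circ> y) t = F (fst \<circ> z, fst \<circ> snd \<circ> z) t"
    using assms(1) past unfolding strictly_causal2_def by simp
  have agree: "((?wh y)(t := c)) s = ((?wh z)(t := c)) s" if "s \<le> t" for s c
    using past that by (cases "s = t") auto
  have Px: "Px ((?wh y)(t := 0)) t = Px ((?wh z)(t := 0)) t"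
    by (rule causalD[OF assms(2)]) (rule agree)
  have "Pu ((?wh y)(t := c)) t = Pu ((?wh z)(t := c)) t" for c
    by (rule causalD[OF assms(3)]) (rule agree)
  with F Px show "closed_loop_step F Px Pu \<delta> y t = closed_loop_step F Px Pu \<delta> z t"
    unfolding closed_loop_step_def \<delta> by (simp add: Let_def)
qed

lemma Phi_S1_closed_loop:
  assumes "strictly_causal2 F" "causal Px" "causal Pu"
  shows "closed_loop_S1 F Px Pu \<delta> (Phi_S1 F Px Pu \<delta>)"
proof -
  let ?G = "closed_loop_step F Px Pu \<delta>"
  have G: "strictly_causal ?G" by (rule strictly_causal_closed_loop_step[OF assms])
  obtain z where "?G z = z" using strictly_causal_fixed_point[OF G] by blast
  moreover have "(\<lambda>t. ((fst \<circ> z) t, (fst \<circ> snd \<circ> z) t, (snd \<circ> snd \<circ> z) t)) = z" by simp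
  ultimately have exists: "closed_loop_S1 F Px Pu \<delta> (fst \<circ> z, fst \<circ> snd \<circ> z, snd \<circ> snd \<circ> z)"
    unfolding closed_loop_S1_iff_fixed_point by simp
  have unique: "y = y'" if "closed_loop_S1 F Px Pu \<delta> y" "closed_loop_S1 F Px Pu \<delta> y'" for y y'
  proof -
    obtain x u wh x' u' wh' where y: "y = (x, u, wh)" "y' = (x', u', wh')"
      by (cases y; cases y')
    have "(\<lambda>t. (x t, u t, wh t)) = (\<lambda>t. (x' t, u' t, wh' t))"
      using that unfolding y closed_loop_S1_iff_fixed_point
      by (rule strictly_causal_fixed_point_unique[OF G])
    then show ?thesis unfolding y by (simp add: fun_eq_iff)
  qed
  show ?thesis unfolding Phi_S1_def
    using exists by (rule theI) (rule unique[OF _ exists])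
qed

section \<open>Incremental bounds through truncation\<close>

lemma trunc_causal:
  assumes "causal A"
  shows "trunc T (A x) = trunc T (A (trunc T x))"
  unfolding fun_eq_iff trunc_def by (auto intro: causalD[OF assms])

lemma trunc_strictly_causal2:
  assumes "strictly_causal2 F"
  shows "trunc T (F (x, u)) = trunc T (F (trunc T x, trunc T u))"
  using assms unfolding fun_eq_iff trunc_def strictly_causal2_def by auto

lemma causal_ifg_trunc_bound:
  assumes N: "is_norm N" and M: "is_norm M" and p: "1 \<le> p" and A: "causal A"
    and ifg: "ifg_stable_with (lp_norm N p) (lp_norm M p) A g b"
  shows "lp_norm M p (trunc T (A x - A y)) \<le> ereal g * lp_norm N p (trunc T (x - y)) + ereal b"
proof -
  have "lp_norm M p (trunc T (A x - A y)) = lp_norm M p (trunc T (A (trunc T x) - A (trunc T y)))"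
    using trunc_causal[OF A, of T x] trunc_causal[OF A, of T y] by simp
  also have "\<dots> \<le> lp_norm M p (A (trunc T x) - A (trunc T y))"
    by (rule lp_norm_trunc_le[OF M p])
  also have "\<dots> \<le> ereal g * lp_norm N p (trunc T (x - y)) + ereal b"
    using ifg lp_norm_trunc_finite[OF N p] unfolding ifg_stable_with_def by simp
  finally show ?thesis .
qed

text \<open>Causality lets an incremental bound, assumed only on l_p, hold for arbitrary signals
  whose difference lies in l_p.\<close>
lemma causal_ifg_bound:
  assumes N: "is_norm N" and M: "is_norm M" and p: "1 \<le> p" and A: "causal A"
    and ifg: "ifg_stable_with (lp_norm N p) (lp_norm M p) A g b"
    and xy: "lp_norm N p (x - y) \<le> ereal c"
  shows "lp_norm M p (A x - A y) \<le> ereal (g * c + b)"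
proof (rule lp_norm_le_if_trunc_le[OF M p])
  fix T
  have "lp_norm M p (trunc T (A x - A y)) \<le> ereal g * lp_norm N p (trunc T (x - y)) + ereal b"
    by (rule causal_ifg_trunc_bound[OF N M p A ifg])
  also have "\<dots> \<le> ereal g * ereal c + ereal b"
    using ifg order_trans[OF lp_norm_trunc_le[OF N p] xy] unfolding ifg_stable_with_def
    by (intro add_right_mono ereal_mult_left_mono) auto
  finally show "lp_norm M p (trunc T (A x - A y)) \<le> ereal (g * c + b)" by simp
qed

lemma strictly_causal2_ifg_bound:
  assumes N: "is_norm N" and M: "is_norm M" and K: "is_norm K" and p: "1 \<le> p"
    and F: "strictly_causal2 F"
    and ifg: "ifg_stable_with (pair_norm (lp_norm N p) (lp_norm M p)) (lp_norm K p) F g b"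
    and x: "lp_norm N p (x - x') \<le> ereal c" and u: "lp_norm M p (u - u') \<le> ereal c'"
  shows "lp_norm K p (F (x, u) - F (x', u')) \<le> ereal (g * (c + c') + b)"
proof (rule lp_norm_le_if_trunc_le[OF K p])
  fix T
  let ?t = "trunc T"
  have fin: "pair_norm (lp_norm N p) (lp_norm M p) (?t x, ?t u) < \<infinity>"
    "pair_norm (lp_norm N p) (lp_norm M p) (?t x', ?t u') < \<infinity>"
    using lp_norm_trunc_finite[OF N p] lp_norm_trunc_finite[OF M p]
    unfolding pair_norm_def by simp_all
  have "lp_norm K p (?t (F (x, u) - F (x', u')))
      = lp_norm K p (?t (F (?t x, ?t u) - F (?t x', ?t u')))"
    using trunc_strictly_causal2[OF F, of T x u] trunc_strictly_causal2[OF F, of T x' u'] by simp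
  also have "\<dots> \<le> lp_norm K p (F (?t x, ?t u) - F (?t x', ?t u'))"
    by (rule lp_norm_trunc_le[OF K p])
  also have "\<dots> \<le> ereal g * (lp_norm N p (?t (x - x')) + lp_norm M p (?t (u - u'))) + ereal b"
    using ifg fin unfolding ifg_stable_with_def pair_norm_def by simp
  also have "\<dots> \<le> ereal g * (ereal c + ereal c') + ereal b"
    using ifg order_trans[OF lp_norm_trunc_le[OF N p] x] order_trans[OF lp_norm_trunc_le[OF M p] u]
    unfolding ifg_stable_with_def by (intro add_right_mono ereal_mult_left_mono add_mono) auto
  finally show "lp_norm K p (?t (F (x, u) - F (x', u'))) \<le> ereal (g * (c + c') + b)" by simp
qed

lemma causal_residual:
  assumes F: "strictly_causal2 F" and Px: "causal Px" and Pu: "causal Pu"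
  shows "causal (\<lambda>w. F (Px w, Pu w) + w - Px w)"
  unfolding causal_def
proof (intro allI impI)
  fix x y :: "nat \<Rightarrow> 'a" and t
  assume xy: "\<forall>s\<le>t. x s = y s"
  have past: "Px x s = Px y s" "Pu x s = Pu y s" if "s \<le> t" for s
    using xy that by (auto intro!: causalD[OF Px] causalD[OF Pu])
  then have "F (Px x, Pu x) t = F (Px y, Pu y) t"
    using F unfolding strictly_causal2_def by simp
  then show "(F (Px x, Pu x) + x - Px x) t = (F (Px y, Pu y) + y - Px y) t"
    using xy past(1)[of t] by simp
qed

text \<open>Small-gain argument: the truncated errors have finite norm, so the contraction
  \<open>\<gamma> < 1\<close> can be absorbed; their bound then passes to the untruncated error.\<close>
lemma small_gain_bound:
  assumes N: "is_norm N" and p: "1 \<le> p" and D: "causal D"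
    and ifg: "ifg_stable_with (lp_norm N p) (lp_norm N p) D \<gamma> \<beta>" and \<gamma>: "\<gamma> < 1"
    and a: "a = D a + r" and a': "a' = D a' + r'" and r: "lp_norm N p (r - r') \<le> ereal \<rho>"
  shows "lp_norm N p (a - a') \<le> ereal ((\<beta> + \<rho>) / (1 - \<gamma>))"
proof (rule lp_norm_le_if_trunc_le[OF N p])
  fix T
  obtain e where e: "lp_norm N p (trunc T (a - a')) = ereal e"
    using lp_norm_finiteE[OF N p lp_norm_trunc_finite[OF N p]] by blast
  have "a - a' = (D a - D a') + (r - r')"
    using a a' by (metis add_diff_add)
  then have "lp_norm N p (trunc T (a - a'))
      \<le> lp_norm N p (trunc T (D a - D a')) + lp_norm N p (trunc T (r - r'))"
    using lp_norm_triangle[OF N p] by (metis trunc_add)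
  also have "\<dots> \<le> (ereal \<gamma> * lp_norm N p (trunc T (a - a')) + ereal \<beta>) + ereal \<rho>"
    using order_trans[OF lp_norm_trunc_le[OF N p] r]
    by (intro add_mono causal_ifg_trunc_bound[OF N N p D ifg])
  finally have "e \<le> \<gamma> * e + \<beta> + \<rho>" using e by simp
  then have "e \<le> (\<beta> + \<rho>) / (1 - \<gamma>)" using \<gamma> by (simp add: field_simps)
  then show "lp_norm N p (trunc T (a - a')) \<le> ereal ((\<beta> + \<rho>) / (1 - \<gamma>))" using e by simp
qed

section \<open>Stability of the perturbed closed loop\<close>

text \<open>Strict causality of \<open>Psix - I\<close> gives \<open>Psix wh t - wh t = Psix (wh(t := 0)) t\<close>, which
  turns the controller equation into \<open>Psix wh = x + v\<close>.\<close>
lemma closed_loop_S1_equations: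
  fixes F :: "(nat \<Rightarrow> 'x::ab_group_add) \<times> (nat \<Rightarrow> 'u::ab_group_add) \<Rightarrow> (nat \<Rightarrow> 'x)"
  assumes F0: "\<forall>x u. F (x, u) 0 = 0" and Px: "strictly_causal (\<lambda>w. Px w - w)"
    and cl: "closed_loop_S1 F Px Pu (w, d, v) (x, u, wh)"
  shows "Px wh = x + v" "Pu wh = u - d"
    "wh = (F (Px wh, Pu wh) + wh - Px wh) + (F (x, u) - F (x + v, u - d) + w + v)"
proof -
  note loop = cl[unfolded closed_loop_S1_def, simplified]
  have "Px wh t = x t + v t" for t
  proof -
    have "Px wh t - wh t = Px (wh(t := 0)) t - (wh(t := 0)) t"
      using strictly_causalD[OF Px, of t wh "wh(t := 0)"] by simp
    then show ?thesis using loop by (simp add: algebra_simps)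
  qed
  then show Px_wh: "Px wh = x + v" by (simp add: fun_eq_iff)
  show Pu_wh: "Pu wh = u - d" using loop by (simp add: fun_eq_iff)
  have "x t = F (x, u) t + w t" for t
    using loop F0 by (cases "t = 0") auto
  then show "wh = (F (Px wh, Pu wh) + wh - Px wh) + (F (x, u) - F (x + v, u - d) + w + v)"
    unfolding Px_wh Pu_wh by (simp add: fun_eq_iff algebra_simps)
qed

lemma plant_perturbation_bound:
  assumes N: "is_norm N" and M: "is_norm M" and p: "1 \<le> p" and F: "strictly_causal2 F"
    and ifg: "ifg_stable_with (pair_norm (lp_norm N p) (lp_norm M p)) (lp_norm N p) F g b"
    and w: "lp_norm N p w \<le> ereal n" and d: "lp_norm M p d \<le> ereal n"
    and v: "lp_norm N p v \<le> ereal n"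
  shows "lp_norm N p (F (x, u) - F (x + v, u - d) + w + v) \<le> ereal (2 * (g + 1) * n + b)"
proof -
  have "lp_norm N p (x - (x + v)) \<le> ereal n" "lp_norm M p (u - (u - d)) \<le> ereal n"
    using v d lp_norm_uminus[OF N p, of v] by simp_all
  then have "lp_norm N p (F (x, u) - F (x + v, u - d)) \<le> ereal (g * (n + n) + b)"
    by (rule strictly_causal2_ifg_bound[OF N M N p F ifg])
  then have "lp_norm N p (F (x, u) - F (x + v, u - d) + w + v)
      \<le> ereal (g * (n + n) + b) + ereal n + ereal n"
    using lp_norm_triangle[OF N p] w v by (meson add_mono order_trans)
  then show ?thesis by (simp add: algebra_simps)
qed

lemma closed_loop_state_increment_bound:
  fixes F :: "(nat \<Rightarrow> 'x::real_vector) \<times> (nat \<Rightarrow> 'u::real_vector) \<Rightarrow> (nat \<Rightarrow> 'x)"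
  assumes N: "is_norm N" and M: "is_norm M" and p: "1 \<le> p"
    and F: "strictly_causal2 F" and F0: "\<forall>x u. F (x, u) 0 = 0"
    and Px: "causal Px" and Pu: "causal Pu" and Px_I: "strictly_causal (\<lambda>w. Px w - w)"
    and ifgF: "ifg_stable_with (pair_norm (lp_norm N p) (lp_norm M p)) (lp_norm N p) F gF bF"
    and ifgD: "ifg_stable_with (lp_norm N p) (lp_norm N p) (\<lambda>w. F (Px w, Pu w) + w - Px w) \<gamma> \<beta>"
    and \<gamma>: "\<gamma> < 1"
    and cl: "closed_loop_S1 F Px Pu (w, d, v) (x, u, wh)"
    and cl': "closed_loop_S1 F Px Pu (w', d', v') (x', u', wh')"
    and n: "lp_norm N p w \<le> ereal n" "lp_norm M p d \<le> ereal n" "lp_norm N p v \<le> ereal n"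
    and n': "lp_norm N p w' \<le> ereal n'" "lp_norm M p d' \<le> ereal n'" "lp_norm N p v' \<le> ereal n'"
  shows "lp_norm N p (wh - wh') \<le> ereal ((\<beta> + 2 * (gF + 1) * (n + n') + 2 * bF) / (1 - \<gamma>))"
proof -
  let ?r = "F (x, u) - F (x + v, u - d) + w + v"
  let ?r' = "F (x', u') - F (x' + v', u' - d') + w' + v'"
  have "lp_norm N p (?r - ?r') \<le> lp_norm N p ?r + lp_norm N p ?r'"
    by (rule lp_norm_diff_le[OF N p])
  also have "\<dots> \<le> ereal (2 * (gF + 1) * n + bF) + ereal (2 * (gF + 1) * n' + bF)"
    by (intro add_mono plant_perturbation_bound[OF N M p F ifgF] n n')
  finally have "lp_norm N p (?r - ?r') \<le> ereal (2 * (gF + 1) * (n + n') + 2 * bF)"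
    by (simp add: algebra_simps)
  then show ?thesis
    using small_gain_bound[OF N p causal_residual[OF F Px Pu] ifgD \<gamma>]
      closed_loop_S1_equations(3)[OF F0 Px_I cl] closed_loop_S1_equations(3)[OF F0 Px_I cl']
    by (simp add: add.assoc)
qed

lemma closed_loop_increment_bound:
  fixes F :: "(nat \<Rightarrow> 'x::real_vector) \<times> (nat \<Rightarrow> 'u::real_vector) \<Rightarrow> (nat \<Rightarrow> 'x)"
  assumes N: "is_norm N" and M: "is_norm M" and p: "1 \<le> p"
    and F: "strictly_causal2 F" and F0: "\<forall>x u. F (x, u) 0 = 0"
    and Px: "causal Px" and Pu: "causal Pu" and Px_I: "strictly_causal (\<lambda>w. Px w - w)"
    and ifgPx: "ifg_stable_with (lp_norm N p) (lp_norm N p) Px gP bP"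
    and ifgPu: "ifg_stable_with (lp_norm N p) (lp_norm M p) Pu gP bP"
    and ifgF: "ifg_stable_with (pair_norm (lp_norm N p) (lp_norm M p)) (lp_norm N p) F gF bF"
    and ifgD: "ifg_stable_with (lp_norm N p) (lp_norm N p) (\<lambda>w. F (Px w, Pu w) + w - Px w) \<gamma> \<beta>"
    and \<gamma>: "\<gamma> < 1"
    and cl: "closed_loop_S1 F Px Pu \<delta> y" and cl': "closed_loop_S1 F Px Pu \<delta>' y'"
    and n: "pair_norm (lp_norm N p) (pair_norm (lp_norm M p) (lp_norm N p)) \<delta> \<le> ereal n"
    and n': "pair_norm (lp_norm N p) (pair_norm (lp_norm M p) (lp_norm N p)) \<delta>' \<le> ereal n'"
  shows "pair_norm (lp_norm N p) (pair_norm (lp_norm M p) (lp_norm N p)) (y - y')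
    \<le> ereal (((2 * gP + 1) * (2 * (gF + 1)) / (1 - \<gamma>) + 2) * (n + n')
              + ((2 * gP + 1) * (\<beta> + 2 * bF) / (1 - \<gamma>) + 2 * bP))"
proof -
  obtain w d v w' d' v' where \<delta>: "\<delta> = (w, d, v)" "\<delta>' = (w', d', v')"
    by (cases \<delta>; cases \<delta>')
  obtain x u wh x' u' wh' where y: "y = (x, u, wh)" "y' = (x', u', wh')"
    by (cases y; cases y')
  note cl = cl[unfolded \<delta> y] and cl' = cl'[unfolded \<delta> y]
  note components = pair_norm3_le_components[OF lp_norm_nonneg[OF N p] lp_norm_nonneg[OF M p]
      lp_norm_nonneg[OF N p]]
  note n = components[OF n[unfolded \<delta>]] and n' = components[OF n'[unfolded \<delta>]]
  have v: "lp_norm N p (v - v') \<le> ereal (n + n')"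
    using order_trans[OF lp_norm_diff_le[OF N p] add_mono[OF n(3) n'(3)]] by simp
  have d: "lp_norm M p (d - d') \<le> ereal (n + n')"
    using order_trans[OF lp_norm_diff_le[OF M p] add_mono[OF n(2) n'(2)]] by simp
  define E where "E = (\<beta> + 2 * (gF + 1) * (n + n') + 2 * bF) / (1 - \<gamma>)"
  have wh: "lp_norm N p (wh - wh') \<le> ereal E"
    unfolding E_def
    by (rule closed_loop_state_increment_bound[OF N M p F F0 Px Pu Px_I ifgF ifgD \<gamma> cl cl' n n'])
  have x_eq: "x - x' = (Px wh - Px wh') - (v - v')" and u_eq: "u - u' = (Pu wh - Pu wh') + (d - d')"
    using closed_loop_S1_equations(1,2)[OF F0 Px_I cl] closed_loop_S1_equations(1,2)[OF F0 Px_I cl']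
    by (simp_all add: algebra_simps)
  have "lp_norm N p (x - x') \<le> ereal (gP * E + bP) + ereal (n + n')"
    unfolding x_eq
    by (rule order_trans[OF lp_norm_diff_le[OF N p] add_mono[OF causal_ifg_bound[OF N N p Px ifgPx wh] v]])
  moreover have "lp_norm M p (u - u') \<le> ereal (gP * E + bP) + ereal (n + n')"
    unfolding u_eq
    by (rule order_trans[OF lp_norm_triangle[OF M p] add_mono[OF causal_ifg_bound[OF N M p Pu ifgPu wh] d]])
  ultimately have "pair_norm (lp_norm N p) (pair_norm (lp_norm M p) (lp_norm N p)) (y - y')
      \<le> (ereal (gP * E + bP) + ereal (n + n')) + ((ereal (gP * E + bP) + ereal (n + n')) + ereal E)"
    unfolding y diff_Pair pair_norm_def prod.case by (intro add_mono wh)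
  also have "\<dots> = ereal ((2 * gP + 1) * E + 2 * bP + 2 * (n + n'))"
    by (simp add: algebra_simps)
  also have "\<dots> = ereal (((2 * gP + 1) * (2 * (gF + 1)) / (1 - \<gamma>) + 2) * (n + n')
              + ((2 * gP + 1) * (\<beta> + 2 * bF) / (1 - \<gamma>) + 2 * bP))"
    unfolding E_def by (simp add: add_divide_distrib algebra_simps)
  finally show ?thesis .
qed

lemma fg_stable_atI:
  fixes NA :: "'a::minus \<Rightarrow> ereal"
  assumes nonneg: "\<And>a. 0 \<le> NA a" and triangle: "\<And>a. NA a \<le> NA (a - a0) + NA a0"
    and a0: "NA a0 = ereal n0" and k: "0 \<le> k" and c: "0 \<le> c"
    and bound: "\<And>a n. NA a \<le> ereal n \<Longrightarrow> NB (A a - A a0) \<le> ereal (k * (n + n0) + c)"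
  shows "fg_stable_at NA NB A a0"
  unfolding fg_stable_at_def
proof (intro exI conjI allI impI)
  have n0: "0 \<le> n0" using nonneg[of a0] a0 by simp
  show "0 \<le> k" "0 \<le> 2 * k * n0 + c" using k c n0 by simp_all
  fix a assume "NA a < \<infinity>"
  then obtain n where n: "NA a = ereal n" using nonneg[of a] by (cases "NA a") auto
  have "ereal (k * (n + n0) + c) \<le> ereal k * NA (a - a0) + ereal (2 * k * n0 + c)"
  proof (cases "NA (a - a0)")
    case (real m)
    then have "n \<le> m + n0" using triangle[of a] n a0 by simp
    then have "k * n \<le> k * (m + n0)" using k by (rule mult_left_mono)
    then show ?thesis using real by (simp add: algebra_simps)
  next
    case PInf
    with k show ?thesis by (cases "k = 0") auto
  qed (use nonneg[of "a - a0"] in simp)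
  with bound[of a n] n show "NB (A a - A a0) \<le> ereal k * NA (a - a0) + ereal (2 * k * n0 + c)"
    by simp
qed

theorem theorem2:
  fixes nx :: "real^'n \<Rightarrow> real" and nu :: "real^'m \<Rightarrow> real" and p :: ereal
    and F :: "(nat \<Rightarrow> real^'n) \<times> (nat \<Rightarrow> real^'m) \<Rightarrow> (nat \<Rightarrow> real^'n)"
    and Psix :: "(nat \<Rightarrow> real^'n) \<Rightarrow> (nat \<Rightarrow> real^'n)"
    and Psiu :: "(nat \<Rightarrow> real^'n) \<Rightarrow> (nat \<Rightarrow> real^'m)"
    and \<gamma> \<beta> :: real
    and \<delta>s :: "(nat \<Rightarrow> real^'n) \<times> (nat \<Rightarrow> real^'m) \<times> (nat \<Rightarrow> real^'n)"
  assumes "is_norm nx" and "is_norm nu" and "1 \<le> p"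
    and "strictly_causal2 F" and "\<forall>x u. F (x, u) 0 = 0"
    and "causal Psix" and "causal Psiu" and "strictly_causal (\<lambda>w. Psix w - w)"
    and "ifg_stable (lp_norm nx p) (pair_norm (lp_norm nx p) (lp_norm nu p)) (\<lambda>w. (Psix w, Psiu w))"
    and "ifg_stable (pair_norm (lp_norm nx p) (lp_norm nu p)) (lp_norm nx p) F"
    and "ifg_stable_with (lp_norm nx p) (lp_norm nx p) (\<lambda>w. F (Psix w, Psiu w) + w - Psix w) \<gamma> \<beta>"
    and "\<gamma> < 1"
    and "pair_norm (lp_norm nx p) (pair_norm (lp_norm nu p) (lp_norm nx p)) \<delta>s < \<infinity>"
  shows "fg_stable_at (pair_norm (lp_norm nx p) (pair_norm (lp_norm nu p) (lp_norm nx p)))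
           (pair_norm (lp_norm nx p) (pair_norm (lp_norm nu p) (lp_norm nx p)))
           (Phi_S1 F Psix Psiu) \<delta>s"
proof -
  note nx = assms(1) and nu = assms(2) and p = assms(3) and F = assms(4,5)
    and Psi = assms(6-8) and ifgD = assms(11) and \<gamma> = assms(12)
  let ?N = "pair_norm (lp_norm nx p) (pair_norm (lp_norm nu p) (lp_norm nx p))"
  obtain gP bP where ifgP: "ifg_stable_with (lp_norm nx p) (pair_norm (lp_norm nx p) (lp_norm nu p))
      (\<lambda>w. (Psix w, Psiu w)) gP bP"
    using assms(9) unfolding ifg_stable_def by blast
  obtain gF bF where ifgF: "ifg_stable_with (pair_norm (lp_norm nx p) (lp_norm nu p)) (lp_norm nx p) F gF bF"
    using assms(10) unfolding ifg_stable_def by blast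
  note ifgPsi = ifg_stable_with_pair_components[OF ifgP lp_norm_nonneg[OF nx p] lp_norm_nonneg[OF nu p]]
  have nonneg: "0 \<le> ?N \<delta>" for \<delta>
    by (intro pair_norm_nonneg lp_norm_nonneg nx nu p)
  have triangle: "?N \<delta> \<le> ?N (\<delta> - \<delta>s) + ?N \<delta>s" for \<delta>
  proof -
    note inner = pair_norm_triangle[of "lp_norm nu p" "lp_norm nx p",
        OF lp_norm_triangle[OF nu p] lp_norm_triangle[OF nx p]]
    show ?thesis
      using pair_norm_triangle[of "lp_norm nx p", OF lp_norm_triangle[OF nx p] inner, of "\<delta> - \<delta>s" \<delta>s]
      by simp
  qed
  obtain n0 where n0: "?N \<delta>s = ereal n0" using assms(13) nonneg by (cases "?N \<delta>s") auto
  have "0 \<le> gP" "0 \<le> bP" "0 \<le> gF" "0 \<le> bF" "0 \<le> \<beta>"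
    using ifgP ifgF ifgD unfolding ifg_stable_with_def by simp_all
  then show ?thesis
  proof (intro fg_stable_atI[OF nonneg triangle n0, where
        k = "(2 * gP + 1) * (2 * (gF + 1)) / (1 - \<gamma>) + 2" and
        c = "(2 * gP + 1) * (\<beta> + 2 * bF) / (1 - \<gamma>) + 2 * bP"])
    fix \<delta> n assume "?N \<delta> \<le> ereal n"
    then show "?N (Phi_S1 F Psix Psiu \<delta> - Phi_S1 F Psix Psiu \<delta>s)
        \<le> ereal (((2 * gP + 1) * (2 * (gF + 1)) / (1 - \<gamma>) + 2) * (n + n0)
                + ((2 * gP + 1) * (\<beta> + 2 * bF) / (1 - \<gamma>) + 2 * bP))"
      by (rule closed_loop_increment_bound[OF nx nu p F Psi ifgPsi ifgF ifgD \<gamma>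
          Phi_S1_closed_loop[OF F(1) Psi(1,2)] Phi_S1_closed_loop[OF F(1) Psi(1,2)] _ eq_refl[OF n0]])
  qed (use \<gamma> in simp_all)
qed

end
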